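(* In the Poisson matching problem $PM(\lambda,\mu)$ (defined in the context), for every blue point $b\in\mathcal{B}$, $$\mathcal{P}(b)=\{r\in\mathcal{R}:g(b,r)=0\}.$$ Moreover, for any $b_1,b_2\in\mathcal{B}$, $\mathcal{P}(b_1)\cap\mathcal{P}(b_2)\ne\emptyset$ implies $\mathcal{P}(b_1)=\mathcal{P}(b_2)$ and $g(b_1,b_2)=1$.
   Context: Poisson matching problem $PM(\lambda,\mu)$, $0<\lambda\le\mu$: $\mathcal{B}$ (blue points) and $\mathcal{R}$ (red points) are independent homogeneous Poisson point processes on $\mathbb{R}$ of intensities $\lambda$ and $\mu$ respectively; $\mathcal{S}=\mathcal{B}\cup\mathcal{R}$. A matching is a map $\mathcal{M}:\mathcal{S}\to\mathcal{S}\cup\{\infty\}$ with $\mathcal{M}(r)\in\mathcal{B}\cup\{\infty\}$ for red $r$, $\mathcal{M}(b)\in\mathcal{R}\cup\{\infty\}$ for blue $b$, and $\mathcal{M}(r)=b$ iff $\mathcal{M}(b)=r$. The matching segment $I_\mathcal{M}(x)$ is the open interval with endpoints $x$ and $\mathcal{M}(x)$ ($(x,\infty)$ if unmatched). $\mathcal{M}$ is nested if for all $x,y\in\mathcal{S}$, $x\in I_\mathcal{M}(y)$ implies $\mathcal{M}(x)$ lies in the closure of $I_\mathcal{M}(y)$. For $b\in\mathcal{B}$, $\mathcal{P}(b)=\{r\in\mathcal{R}:\exists\text{ nested }\mathcal{M}\text{ with }\mathcal{M}(b)=r\}$. For $x<y$, $g(x,y)$ is the number of red points in the open interval $(x,y)$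 minus the number of blue points in $(x,y)$; for $x>y$, $g(x,y)=g(y,x)$. *)

theory Defs
  imports "HOL-Analysis.Analysis" "HOL-Library.Extended_Real"
begin

text \<open>A matching is a map M :: real => ereal; the value PInfty (\<infinity>) means "unmatched".
  Only the values of M on B \<union> R are relevant.\<close>

definition is_matching :: "real set \<Rightarrow> real set \<Rightarrow> (real \<Rightarrow> ereal) \<Rightarrow> bool" where
  "is_matching B R M \<longleftrightarrow>
     (\<forall>r\<in>R. M r \<in> ereal ` B \<union> {\<infinity>}) \<and>
     (\<forall>b\<in>B. M b \<in> ereal ` R \<union> {\<infinity>}) \<and>
     (\<forall>r\<in>R. \<forall>b\<in>B. M r = ereal b \<longleftrightarrow> M b = ereal r)"

definition seg :: "(real \<Rightarrow> ereal) \<Rightarrow> real \<Rightarrow> ereal set" where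
  "seg M x = {min (ereal x) (M x) <..< max (ereal x) (M x)}"

text \<open>Nested matching; closure is taken in the extended reals, so the closure of (x,\<infinity>) contains \<infinity>.\<close>
definition nested :: "real set \<Rightarrow> real set \<Rightarrow> (real \<Rightarrow> ereal) \<Rightarrow> bool" where
  "nested B R M \<longleftrightarrow>
     (\<forall>x\<in>B \<union> R. \<forall>y\<in>B \<union> R. ereal x \<in> seg M y \<longrightarrow> M x \<in> closure (seg M y))"

definition Pset :: "real set \<Rightarrow> real set \<Rightarrow> real \<Rightarrow> real set" where
  "Pset B R b = {r\<in>R. \<exists>M. is_matching B R M \<and> nested B R M \<and> M b = ereal r}"

definition gfun :: "real set \<Rightarrow> real set \<Rightarrow> real \<Rightarrow> real \<Rightarrow> int" where
  "gfun B R x y = int (card (R \<inter> {min x y<..<max x y})) - int (card (B \<inter> {min x y<..<max x y}))"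

end

theory Submission
  imports Defs
begin

text \<open>If b is matched to r by a nested matching, every point strictly between them is matched
  to a point of the closed segment other than b and r; so the matching pairs the red and the blue
  points between b and r, and g(b, r) = 0. Conversely, if g(b, r) = 0, the points strictly
  between b and r admit a non-crossing matching: a closest red-blue pair has no point between
  them and can be removed. Adding the pair (b, r) and leaving every other point unmatched gives a
  nested matching, since an unmatched point y lies outside [b, r] and its segment (y, \<infinity>)
  contains either unmatched points or the whole block [b, r].

  For the second claim, splitting g at a point shows that for blue b1 < b2 and red r the values
  g(b1, r) and g(b2, r) differ, up to sign, by g(b1, b2) - 1; a common zero forces g(b1, b2) = 1,
  and then the zero sets coincide.\<close>

definition nested_pairing :: "real set \<Rightarrow> real set \<Rightarrow> real set \<Rightarrow> (real \<Rightarrow> real) \<Rightarrow> bool" where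
  "nested_pairing B R S m \<longleftrightarrow>
     (\<forall>x\<in>S. m x \<in> S \<and> m (m x) = x \<and> (x \<in> R \<longrightarrow> m x \<in> B) \<and> (x \<in> B \<longrightarrow> m x \<in> R)) \<and>
     (\<forall>x\<in>S. \<forall>y\<in>S. min y (m y) < x \<and> x < max y (m y) \<longrightarrow> min y (m y) \<le> m x \<and> m x \<le> max y (m y))"

lemma nested_pairing_partner:
  assumes "nested_pairing B R S m" "x \<in> S"
  shows "m x \<in> S" "m (m x) = x" "x \<in> R \<Longrightarrow> m x \<in> B" "x \<in> B \<Longrightarrow> m x \<in> R"
  using assms unfolding nested_pairing_def by blast+

lemma nested_pairing_empty: "nested_pairing B R {} m"
  by (simp add: nested_pairing_def)

lemma nested_pairing_add_pair:
  assumes m: "nested_pairing B R S m" and disj: "B \<inter> R = {}"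
    and u: "u \<in> R" "u \<notin> S" and v: "v \<in> B" "v \<notin> S"
    and noncrossing: "\<And>y. y \<in> S \<Longrightarrow> (min u v < y \<and> y < max u v) \<longleftrightarrow> (min u v < m y \<and> m y < max u v)"
  shows "nested_pairing B R (insert u (insert v S)) (m(u := v, v := u))"
proof -
  define m' where "m' = m(u := v, v := u)"
  have uv: "u \<noteq> v" using u v disj by auto
  have inv: "\<forall>x\<in>S. m x \<in> S \<and> m (m x) = x \<and> (x \<in> R \<longrightarrow> m x \<in> B) \<and> (x \<in> B \<longrightarrow> m x \<in> R)"
    and nest: "\<forall>x\<in>S. \<forall>y\<in>S. min y (m y) < x \<and> x < max y (m y) \<longrightarrow> min y (m y) \<le> m x \<and> m x \<le> max y (m y)"
    using m by (auto simp: nested_pairing_def)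
  have "min y (m' y) \<le> m' x \<and> m' x \<le> max y (m' y)"
    if x: "x \<in> insert u (insert v S)" and y: "y \<in> insert u (insert v S)"
      and xy: "min y (m' y) < x" "x < max y (m' y)" for x y
  proof (cases "y \<in> S")
    case True
    have my: "m' y = m y" "m y \<in> S" using True inv u v by (auto simp: m'_def)
    show ?thesis
    proof (cases "x \<in> S")
      case True
      then show ?thesis using nest \<open>y \<in> S\<close> xy my inv u v by (auto simp: m'_def)
    next
      case False
      then have "x = u \<or> x = v" using x by auto
      then show ?thesis
        using xy my noncrossing[OF \<open>y \<in> S\<close>] uv by (auto simp: m'_def min_def max_def split: if_splits)
    qed
  next
    case False
    then have y': "y = u \<and> m' y = v \<or> y = v \<and> m' y = u" using y uv by (auto simp: m'_def)
    then have "x \<in> S" using x xy by auto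
    then show ?thesis using y' xy noncrossing[of x] inv u v by (auto simp: m'_def)
  qed
  moreover have "\<forall>x\<in>insert u (insert v S). m' x \<in> insert u (insert v S) \<and> m' (m' x) = x \<and>
      (x \<in> R \<longrightarrow> m' x \<in> B) \<and> (x \<in> B \<longrightarrow> m' x \<in> R)"
    using inv u v uv disj by (auto simp: m'_def)
  ultimately show ?thesis unfolding nested_pairing_def m'_def by blast
qed

lemma closest_opposite_pair:
  fixes S B R :: "real set"
  assumes fin: "finite S" and S: "S \<subseteq> B \<union> R" and ne: "S \<inter> R \<noteq> {}" "S \<inter> B \<noteq> {}"
  obtains u v where "u \<in> S \<inter> R" "v \<in> S \<inter> B" "\<And>w. w \<in> S \<Longrightarrow> \<not> (min u v < w \<and> w < max u v)"
proof -
  define P where "P = (S \<inter> R) \<times> (S \<inter> B)"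
  have "finite P" "P \<noteq> {}" using fin ne by (auto simp: P_def)
  then obtain u v where uv: "(u, v) \<in> P" and closest: "\<And>p. p \<in> P \<Longrightarrow> \<not> \<bar>fst p - snd p\<bar> < \<bar>u - v\<bar>"
    using ex_is_arg_min_if_finite[of P "\<lambda>p. \<bar>fst p - snd p\<bar>"] unfolding is_arg_min_def by fastforce
  have "\<not> (min u v < w \<and> w < max u v)" if "w \<in> S" for w
  proof
    assume between: "min u v < w \<and> w < max u v"
    have "w \<in> R \<or> w \<in> B" using that S by auto
    then show False
    proof
      assume "w \<in> R"
      then show False using closest[of "(w, v)"] uv between that by (auto simp: P_def abs_if min_def max_def split: if_splits)
    next
      assume "w \<in> B"
      then show False using closest[of "(u, w)"] uv between that by (auto simp: P_def abs_if min_def max_def split: if_splits)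
    qed
  qed
  then show ?thesis using that uv by (auto simp: P_def)
qed

lemma nested_pairing_exists:
  assumes disj: "B \<inter> R = {}"
    and "finite S" "S \<subseteq> B \<union> R" "card (S \<inter> R) = card (S \<inter> B)"
  shows "\<exists>m. nested_pairing B R S m"
  using assms(2-4)
proof (induction "card S" arbitrary: S rule: less_induct)
  case less
  show ?case
  proof (cases "S = {}")
    case True
    then show ?thesis using nested_pairing_empty by blast
  next
    case False
    have fin: "finite (S \<inter> R)" "finite (S \<inter> B)" using less.prems(1) by auto
    have "S \<inter> R \<noteq> {} \<or> S \<inter> B \<noteq> {}" using False less.prems(2) by blast
    then have "S \<inter> R \<noteq> {}" "S \<inter> B \<noteq> {}" using less.prems(3) fin by (metis card_0_eq)+
    then obtain u v where u: "u \<in> S \<inter> R" and v: "v \<in> S \<inter> B"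
      and adjacent: "\<And>w. w \<in> S \<Longrightarrow> \<not> (min u v < w \<and> w < max u v)"
      using closest_opposite_pair[OF less.prems(1,2)] by blast
    define S' where "S' = S - {u, v}"
    have "u \<noteq> v" using u v disj by auto
    then have "card S' < card S"
      using u v less.prems(1) unfolding S'_def by (metis Diff_insert2 IntD1 card_Diff2_less)
    moreover have "card (S' \<inter> R) = card (S' \<inter> B)"
    proof -
      have "S' \<inter> R = (S \<inter> R) - {u}" "S' \<inter> B = (S \<inter> B) - {v}" using u v disj by (auto simp: S'_def)
      then show ?thesis using u v fin less.prems(3) by simp
    qed
    ultimately obtain m where m: "nested_pairing B R S' m"
      using less.hyps less.prems(1,2) unfolding S'_def by blast
    have "nested_pairing B R (insert u (insert v S')) (m(u := v, v := u))"
      using u v adjacent nested_pairing_partner(1)[OF m] by (intro nested_pairing_add_pair[OF m disj]) (auto simp: S'_def)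
    moreover have "insert u (insert v S') = S" using u v by (auto simp: S'_def)
    ultimately show ?thesis by auto
  qed
qed

lemma seg_eq_real: "M y = ereal z \<Longrightarrow> seg M y = {ereal (min y z)<..<ereal (max y z)}"
  by (auto simp: seg_def min_def max_def)

lemma seg_eq_infinity: "M y = \<infinity> \<Longrightarrow> seg M y = {ereal y<..<\<infinity>}"
  by (auto simp: seg_def)

lemma mem_seg_real: "M y = ereal z \<Longrightarrow> ereal x \<in> seg M y \<longleftrightarrow> min y z < x \<and> x < max y z"
  by (auto simp: seg_def min_def max_def)

lemma mem_seg_infinity: "M y = \<infinity> \<Longrightarrow> ereal x \<in> seg M y \<longleftrightarrow> y < x"
  by (simp add: seg_def)

lemma ereal_image_atLeastAtMost: "ereal ` {a..b} = {ereal a..ereal b}"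
proof (rule set_eqI)
  fix v :: ereal
  show "v \<in> ereal ` {a..b} \<longleftrightarrow> v \<in> {ereal a..ereal b}" by (cases v) auto
qed

lemma closure_seg_real:
  assumes "M y = ereal z" "y \<noteq> z"
  shows "closure (seg M y) = ereal ` {min y z..max y z}"
proof -
  have "min y z < max y z" using assms(2) by (auto simp: min_def max_def)
  then show ?thesis
    unfolding seg_eq_real[of M y z, OF assms(1)] ereal_image_atLeastAtMost
    by (simp del: ereal_min ereal_max)
qed

lemma closure_seg_infinity: "M y = \<infinity> \<Longrightarrow> closure (seg M y) = {ereal y..\<infinity>}"
  by (subst seg_eq_infinity, assumption, rule closure_greaterThanLessThan) auto

definition matching_of_pairing :: "real set \<Rightarrow> (real \<Rightarrow> real) \<Rightarrow> real \<Rightarrow> ereal" where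
  "matching_of_pairing S m x = (if x \<in> S then ereal (m x) else \<infinity>)"

lemma is_matching_matching_of_pairing:
  assumes m: "nested_pairing B R S m"
  shows "is_matching B R (matching_of_pairing S m)"
  unfolding is_matching_def
proof (intro conjI ballI)
  fix x assume "x \<in> R"
  then show "matching_of_pairing S m x \<in> ereal ` B \<union> {\<infinity>}"
    using nested_pairing_partner[OF m] by (simp add: matching_of_pairing_def)
next
  fix x assume "x \<in> B"
  then show "matching_of_pairing S m x \<in> ereal ` R \<union> {\<infinity>}"
    using nested_pairing_partner[OF m] by (simp add: matching_of_pairing_def)
next
  fix r b
  show "matching_of_pairing S m r = ereal b \<longleftrightarrow> matching_of_pairing S m b = ereal r"
    using nested_pairing_partner(1,2)[OF m] by (auto simp: matching_of_pairing_def)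
qed

lemma nested_matching_of_pairing:
  assumes m: "nested_pairing B R S m" and S: "S = (B \<union> R) \<inter> {lo..hi}"
  shows "nested B R (matching_of_pairing S m)"
proof -
  define M where "M = matching_of_pairing S m"
  have in_S: "x \<in> S \<longleftrightarrow> x \<in> B \<union> R \<and> lo \<le> x \<and> x \<le> hi" for x
    using S by auto
  have "nested B R M"
    unfolding nested_def
  proof (intro ballI impI)
    fix x y
    assume x: "x \<in> B \<union> R" and y: "y \<in> B \<union> R" and inside: "ereal x \<in> seg M y"
    show "M x \<in> closure (seg M y)"
    proof (cases "y \<in> S")
      case True
      then have My: "M y = ereal (m y)" by (simp add: M_def matching_of_pairing_def)
      have between: "min y (m y) < x" "x < max y (m y)" using inside mem_seg_real[of M y, OF My] by auto
      have "lo \<le> min y (m y)" "max y (m y) \<le> hi"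
        using True nested_pairing_partner(1)[OF m True] unfolding in_S by auto
      then have "x \<in> S" using x between unfolding in_S by auto
      then have "min y (m y) \<le> m x \<and> m x \<le> max y (m y)"
        using m True between unfolding nested_pairing_def by blast
      moreover have "y \<noteq> m y" using between by linarith
      ultimately show ?thesis
        using closure_seg_real[of M y, OF My] \<open>x \<in> S\<close> by (auto simp: M_def matching_of_pairing_def)
    next
      case False
      then have My: "M y = \<infinity>" by (simp add: M_def matching_of_pairing_def)
      have "y < x" using inside mem_seg_infinity[of M y, OF My] by auto
      show ?thesis
      proof (cases "x \<in> S")
        case True
        have "y < lo" using False y True \<open>y < x\<close> unfolding in_S by auto
        moreover have "lo \<le> m x" using nested_pairing_partner(1)[OF m True] unfolding in_S by blast
        ultimately show ?thesis
          using closure_seg_infinity[of M y, OF My] True by (simp add: M_def matching_of_pairing_def)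
      next
        case False
        then show ?thesis
          using closure_seg_infinity[of M y, OF My] by (simp add: M_def matching_of_pairing_def)
      qed
    qed
  qed
  then show ?thesis by (simp add: M_def)
qed

lemma card_eq_if_matched_within:
  assumes M: "is_matching B R M" and within: "\<And>x. x \<in> (B \<union> R) \<inter> I \<Longrightarrow> \<exists>c\<in>I. M x = ereal c"
  shows "card (R \<inter> I) = card (B \<inter> I)"
proof -
  define f where "f x = real_of_ereal (M x)" for x
  have red: "f x \<in> B \<inter> I \<and> f (f x) = x" if x: "x \<in> R \<inter> I" for x
  proof -
    obtain c where c: "c \<in> I" "M x = ereal c" using within x by blast
    then have "c \<in> B" using M x unfolding is_matching_def by auto
    then have "M c = ereal x" using M x c(2) unfolding is_matching_def by blast
    then show ?thesis using c \<open>c \<in> B\<close> by (simp add: f_def)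
  qed
  have blue: "f x \<in> R \<inter> I \<and> f (f x) = x" if x: "x \<in> B \<inter> I" for x
  proof -
    obtain c where c: "c \<in> I" "M x = ereal c" using within x by blast
    then have "c \<in> R" using M x unfolding is_matching_def by auto
    then have "M c = ereal x" using M x c(2) unfolding is_matching_def by blast
    then show ?thesis using c \<open>c \<in> R\<close> by (simp add: f_def)
  qed
  have "bij_betw f (R \<inter> I) (B \<inter> I)"
    by (rule bij_betw_byWitness[where f' = f]) (use red blue in blast)+
  then show ?thesis by (rule bij_betw_same_card)
qed

lemma matched_inside_nested_segment:
  assumes M: "is_matching B R M" "nested B R M" "M b = ereal r" and b: "b \<in> B" and r: "r \<in> R"
    and disj: "B \<inter> R = {}" and x: "x \<in> B \<union> R" "min b r < x" "x < max b r"
  shows "\<exists>c\<in>{min b r<..<max b r}. M x = ereal c"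
proof -
  have "b \<noteq> r" using b r disj by auto
  have "ereal x \<in> seg M b" using mem_seg_real[of M b, OF M(3)] x by simp
  then have "M x \<in> closure (seg M b)" using M(2) x(1) b unfolding nested_def by blast
  then obtain c where c: "M x = ereal c" "min b r \<le> c" "c \<le> max b r"
    unfolding closure_seg_real[of M b, OF M(3) \<open>b \<noteq> r\<close>] by auto
  have Mr: "M r = ereal b" using M(1,3) b r unfolding is_matching_def by blast
  have "c \<noteq> b"
  proof
    assume "c = b"
    have "x \<notin> B"
    proof
      assume "x \<in> B"
      then have "M x \<in> ereal ` R \<union> {\<infinity>}" using M(1) unfolding is_matching_def by blast
      then show False using c(1) \<open>c = b\<close> b disj by auto
    qed
    then have "x \<in> R" using x(1) by blast
    then have "M b = ereal x" using M(1) c(1) \<open>c = b\<close> b unfolding is_matching_def by blast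
    then show False using M(3) x by auto
  qed
  moreover have "c \<noteq> r"
  proof
    assume "c = r"
    have "x \<notin> R"
    proof
      assume "x \<in> R"
      then have "M x \<in> ereal ` B \<union> {\<infinity>}" using M(1) unfolding is_matching_def by blast
      then show False using c(1) \<open>c = r\<close> r disj by auto
    qed
    then have "x \<in> B" using x(1) by blast
    then have "M r = ereal x" using M(1) c(1) \<open>c = r\<close> r unfolding is_matching_def by blast
    then show False using Mr x by auto
  qed
  ultimately show ?thesis using c by (auto simp: min_def max_def split: if_splits)
qed

lemma gfun_eq_0_if_nested_matched:
  assumes M: "is_matching B R M" "nested B R M" "M b = ereal r" and b: "b \<in> B" and r: "r \<in> R"
    and disj: "B \<inter> R = {}"
  shows "gfun B R b r = 0"
proof -
  have "card (R \<inter> {min b r<..<max b r}) = card (B \<inter> {min b r<..<max b r})"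
    using matched_inside_nested_segment[OF M b r disj]
    by (intro card_eq_if_matched_within[OF M(1)]) auto
  then show ?thesis by (simp add: gfun_def)
qed

lemma in_Pset_if_gfun_eq_0:
  assumes disj: "B \<inter> R = {}" and locfinB: "\<And>a c. finite (B \<inter> {a..c})"
    and locfinR: "\<And>a c. finite (R \<inter> {a..c})"
    and b: "b \<in> B" and r: "r \<in> R" and g: "gfun B R b r = 0"
  shows "r \<in> Pset B R b"
proof -
  define lo where "lo = min b r"
  define hi where "hi = max b r"
  define S where "S = (B \<union> R) \<inter> {lo<..<hi}"
  have fin: "finite S"
    by (rule finite_subset[of _ "B \<inter> {lo..hi} \<union> R \<inter> {lo..hi}"]) (auto simp: S_def locfinB locfinR)
  have "S \<inter> R = R \<inter> {lo<..<hi}" "S \<inter> B = B \<inter> {lo<..<hi}" by (auto simp: S_def)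
  then have "card (S \<inter> R) = card (S \<inter> B)" using g by (simp add: gfun_def lo_def hi_def)
  then obtain m where m: "nested_pairing B R S m"
    using nested_pairing_exists[OF disj fin] by (auto simp: S_def)
  have m': "nested_pairing B R (insert r (insert b S)) (m(r := b, b := r))"
    using b r disj nested_pairing_partner(1)[OF m]
    by (intro nested_pairing_add_pair[OF m disj]) (auto simp: S_def lo_def hi_def min.commute max.commute)
  have S': "insert r (insert b S) = (B \<union> R) \<inter> {lo..hi}"
    using b r by (auto simp: S_def lo_def hi_def)
  define M where "M = matching_of_pairing (insert r (insert b S)) (m(r := b, b := r))"
  have "is_matching B R M" "nested B R M"
    using is_matching_matching_of_pairing[OF m'] nested_matching_of_pairing[OF m' S']
    by (simp_all add: M_def)
  moreover have "M b = ereal r" by (simp add: M_def matching_of_pairing_def)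
  ultimately show ?thesis using r unfolding Pset_def by blast
qed

lemma card_Int_greaterThanLessThan_split:
  fixes S :: "real set"
  assumes "x < y" "y < z" "finite (S \<inter> {x..z})"
  shows "card (S \<inter> {x<..<z}) = card (S \<inter> {x<..<y}) + card (S \<inter> {y}) + card (S \<inter> {y<..<z})"
proof -
  have fin: "finite (S \<inter> {x<..<y})" "finite (S \<inter> {y<..<z})"
    using assms by (auto intro: finite_subset[OF _ assms(3)])
  have "S \<inter> {x<..<z} = (S \<inter> {x<..<y}) \<union> ((S \<inter> {y}) \<union> (S \<inter> {y<..<z}))"
    using assms(1,2) by auto
  also have "card \<dots> = card (S \<inter> {x<..<y}) + card ((S \<inter> {y}) \<union> (S \<inter> {y<..<z}))"
    using fin by (intro card_Un_disjoint) auto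
  also have "card ((S \<inter> {y}) \<union> (S \<inter> {y<..<z})) = card (S \<inter> {y}) + card (S \<inter> {y<..<z})"
    using fin by (intro card_Un_disjoint) auto
  finally show ?thesis by simp
qed

lemma gfun_sym: "gfun B R x y = gfun B R y x"
  unfolding gfun_def by (simp add: min.commute max.commute)

lemma gfun_split:
  assumes "x < y" "y < z" "\<And>a c. finite (B \<inter> {a..c})" "\<And>a c. finite (R \<inter> {a..c})"
  shows "gfun B R x z = gfun B R x y + (if y \<in> R then 1 else 0) - (if y \<in> B then 1 else 0) + gfun B R y z"
  using card_Int_greaterThanLessThan_split[of x y z R] card_Int_greaterThanLessThan_split[of x y z B] assms
  unfolding gfun_def by (simp add: min_def max_def)

lemma gfun_two_blues_red:
  assumes disj: "B \<inter> R = {}" and locfinB: "\<And>a c. finite (B \<inter> {a..c})"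
    and locfinR: "\<And>a c. finite (R \<inter> {a..c})"
    and b: "b1 \<in> B" "b2 \<in> B" "b1 \<noteq> b2" and r: "r \<in> R"
  shows "gfun B R b1 r - gfun B R b2 r = gfun B R b1 b2 - 1 \<or>
         gfun B R b2 r - gfun B R b1 r = gfun B R b1 b2 - 1 \<or>
         gfun B R b1 r + gfun B R b2 r = gfun B R b1 b2 - 1"
  using b
proof (induction b1 b2 rule: linorder_wlog)
  case (le b1 b2)
  then have lt: "b1 < b2" by simp
  have col: "b1 \<notin> R" "b2 \<notin> R" "r \<notin> B" "r \<noteq> b1" "r \<noteq> b2" using le r disj by auto
  note split = gfun_split[OF _ _ locfinB locfinR]
  consider "r < b1" | "b1 < r" "r < b2" | "b2 < r" using col by linarith
  then show ?case
  proof cases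
    case 1
    then show ?thesis
      using split[OF 1 lt] le col r gfun_sym[of B R r] by auto
  next
    case 2
    then show ?thesis
      using split[OF 2] col r gfun_sym[of B R r b2] by auto
  next
    case 3
    then show ?thesis
      using split[OF lt 3] le col by auto
  qed
next
  case (sym b1 b2)
  then show ?case by (auto simp: gfun_sym[of B R b1 b2])
qed

theorem lemmaA5:
  fixes B R :: "real set"
  assumes disj: "B \<inter> R = {}"
    and locfinB: "\<And>a c. finite (B \<inter> {a..c})"
    and locfinR: "\<And>a c. finite (R \<inter> {a..c})"
  shows "(\<forall>b\<in>B. Pset B R b = {r\<in>R. gfun B R b r = 0}) \<and>
         (\<forall>b1\<in>B. \<forall>b2\<in>B. b1 \<noteq> b2 \<and> Pset B R b1 \<inter> Pset B R b2 \<noteq> {} \<longrightarrow>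
             Pset B R b1 = Pset B R b2 \<and> gfun B R b1 b2 = 1)"
proof -
  have Pset_eq: "Pset B R b = {r\<in>R. gfun B R b r = 0}" if "b \<in> B" for b
    using gfun_eq_0_if_nested_matched[OF _ _ _ that _ disj] in_Pset_if_gfun_eq_0[OF assms that]
    unfolding Pset_def by blast
  have "Pset B R b1 = Pset B R b2 \<and> gfun B R b1 b2 = 1"
    if b: "b1 \<in> B" "b2 \<in> B" "b1 \<noteq> b2" and common: "Pset B R b1 \<inter> Pset B R b2 \<noteq> {}" for b1 b2
  proof -
    note two_blues = gfun_two_blues_red[OF assms b]
    obtain r where "r \<in> R" "gfun B R b1 r = 0" "gfun B R b2 r = 0"
      using common Pset_eq b by blast
    then have "gfun B R b1 b2 = 1" using two_blues by fastforce
    then have "gfun B R b1 r = 0 \<longleftrightarrow> gfun B R b2 r = 0" if "r \<in> R" for r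
      using two_blues[OF that] by auto
    then show ?thesis using Pset_eq b \<open>gfun B R b1 b2 = 1\<close> by auto
  qed
  then show ?thesis using Pset_eq by blast
qed

end
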